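(* Let $A$ be a commutative ring and $\sigma$ a hereditary torsion theory on $A$-modules. If $A$ is totally $\sigma$-artinian, then every finitely generated $A$-module is totally $\sigma$-artinian.
   Context: $\mathcal{L}(\sigma)$ is the Gabriel filter of $\sigma$. An $A$-module $M$ is totally $\sigma$-artinian if for every descending chain of submodules $N_1\supseteq N_2\supseteq\cdots$ there exist $m$ and $\mathfrak{h}\in\mathcal{L}(\sigma)$ with $N_m\mathfrak{h}\subseteq N_s$ for all $s\ge m$; the ring $A$ is totally $\sigma$-artinian if $A$ is so as an $A$-module. *)

theory Defs
  imports "HOL-Algebra.Algebra"
begin

definition colon_ideal :: "('a, 'm) ring_scheme \<Rightarrow> 'a set \<Rightarrow> 'a \<Rightarrow> 'a set" where
  "colon_ideal R I a = {r \<in> carrier R. r \<otimes>\<^bsub>R\<^esub> a \<in> I}"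

(* Gabriel filter (Gabriel topology) of ideals of a commutative ring R;
   these correspond bijectively to hereditary torsion theories sigma,
   via sigma \<mapsto> L(sigma). *)
definition gabriel_filter :: "('a, 'm) ring_scheme \<Rightarrow> 'a set set \<Rightarrow> bool" where
  "gabriel_filter R F \<longleftrightarrow>
     (\<forall>I\<in>F. ideal I R) \<and>
     carrier R \<in> F \<and>
     (\<forall>I J. I \<in> F \<and> ideal J R \<and> I \<subseteq> J \<longrightarrow> J \<in> F) \<and>
     (\<forall>I J. I \<in> F \<and> J \<in> F \<longrightarrow> I \<inter> J \<in> F) \<and>
     (\<forall>I\<in>F. \<forall>a\<in>carrier R. colon_ideal R I a \<in> F) \<and>
     (\<forall>I J. ideal I R \<and> J \<in> F \<and> (\<forall>a\<in>J. colon_ideal R I a \<in> F) \<longrightarrow> I \<in> F)"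

definition gen_submodule :: "('a, 'n) ring_scheme \<Rightarrow> ('a, 'b, 'm) module_scheme \<Rightarrow> 'b set \<Rightarrow> 'b set" where
  "gen_submodule R M S = \<Inter> {P. submodule P R M \<and> S \<subseteq> P}"

definition submod_ideal_prod :: "('a, 'n) ring_scheme \<Rightarrow> ('a, 'b, 'm) module_scheme \<Rightarrow> 'b set \<Rightarrow> 'a set \<Rightarrow> 'b set" where
  "submod_ideal_prod R M N h = gen_submodule R M {a \<odot>\<^bsub>M\<^esub> x | a x. a \<in> h \<and> x \<in> N}"

definition finitely_generated_module :: "('a, 'n) ring_scheme \<Rightarrow> ('a, 'b, 'm) module_scheme \<Rightarrow> bool" where
  "finitely_generated_module R M \<longleftrightarrow>
     (\<exists>S. finite S \<and> S \<subseteq> carrier M \<and> gen_submodule R M S = carrier M)"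

definition totally_sigma_artinian ::
  "('a, 'n) ring_scheme \<Rightarrow> 'a set set \<Rightarrow> ('a, 'b, 'm) module_scheme \<Rightarrow> bool" where
  "totally_sigma_artinian R F M \<longleftrightarrow>
     (\<forall>N :: nat \<Rightarrow> 'b set. (\<forall>n. submodule (N n) R M) \<and> (\<forall>n. N (Suc n) \<subseteq> N n) \<longrightarrow>
        (\<exists>m. \<exists>h\<in>F. \<forall>s\<ge>m. submod_ideal_prod R M (N m) h \<subseteq> N s))"

definition ring_as_module :: "('a, 'm) ring_scheme \<Rightarrow> ('a, 'a) module" where
  "ring_as_module R = \<lparr>carrier = carrier R, monoid.mult = monoid.mult R, monoid.one = monoid.one R,
                        ring.zero = ring.zero R, ring.add = ring.add R, smult = monoid.mult R\<rparr>"

end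

(*
  Induction on a finite generating set. Suppose every N n lies in P + A x, where P is generated
  by fewer elements. By induction the chain N n \<inter> P is stationary up to some h2 in L(sigma),
  and the colon ideals (N n + P : x) form a descending chain of ideals of A, which is stationary
  up to some h1 in L(sigma) because A is totally sigma-artinian. Writing a y = z + y' with z in
  N k \<inter> P and y' deep in the chain, one sees that h2 h1 maps N k into \<Inter>n. N n for k large.
  The ideal of all elements doing so contains h2 h1, hence lies in L(sigma) by the colon axiom
  of a Gabriel filter.
*)
theory Submission
  imports Defs
begin

definition submodule_colon ::
  "('a, 'n) ring_scheme \<Rightarrow> ('a, 'b, 'm) module_scheme \<Rightarrow> 'b set \<Rightarrow> 'b set \<Rightarrow> 'a set" where
  "submodule_colon R M Q Y = {c \<in> carrier R. \<forall>y\<in>Y. c \<odot>\<^bsub>M\<^esub> y \<in> Q}"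

text \<open>Elementwise form of the condition in the definition of total sigma-artinianity; since
  the chain descends, it suffices to land in its intersection.\<close>
definition sigma_stationary ::
  "('a, 'b, 'm) module_scheme \<Rightarrow> 'a set set \<Rightarrow> (nat \<Rightarrow> 'b set) \<Rightarrow> bool" where
  "sigma_stationary M F N \<longleftrightarrow> (\<exists>m. \<exists>h\<in>F. \<forall>a\<in>h. \<forall>y\<in>N m. a \<odot>\<^bsub>M\<^esub> y \<in> (\<Inter>n. N n))"

lemma gabriel_filter_ideal: "gabriel_filter R F \<Longrightarrow> I \<in> F \<Longrightarrow> ideal I R"
  unfolding gabriel_filter_def by blast

lemma gabriel_filter_carrier: "gabriel_filter R F \<Longrightarrow> carrier R \<in> F"
  unfolding gabriel_filter_def by blast

lemma gabriel_filter_upward_closed: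
  "gabriel_filter R F \<Longrightarrow> I \<in> F \<Longrightarrow> ideal J R \<Longrightarrow> I \<subseteq> J \<Longrightarrow> J \<in> F"
  unfolding gabriel_filter_def by (elim conjE) blast

lemma gabriel_filter_colon_closed:
  assumes "gabriel_filter R F" "ideal I R" "J \<in> F" "\<And>a. a \<in> J \<Longrightarrow> colon_ideal R I a \<in> F"
  shows "I \<in> F"
proof -
  have "\<forall>I J. ideal I R \<and> J \<in> F \<and> (\<forall>a\<in>J. colon_ideal R I a \<in> F) \<longrightarrow> I \<in> F"
    using assms(1) unfolding gabriel_filter_def by (elim conjE)
  then show ?thesis using assms(2-4) by blast
qed

lemma (in cring) ideal_colon_ideal:
  assumes "ideal I R" and a: "a \<in> carrier R"
  shows "ideal (colon_ideal R I a) R"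
proof -
  interpret I: ideal I R by fact
  show ?thesis
  proof (rule idealI)
    show "subgroup (colon_ideal R I a) (add_monoid R)"
    proof (rule add.subgroupI)
      show "colon_ideal R I a \<noteq> {}"
        using a by (auto simp: colon_ideal_def intro!: exI[of _ \<zero>])
    qed (use a in \<open>auto simp: colon_ideal_def l_minus l_distr I.a_inv_closed I.a_closed\<close>)
  next
    fix r x assume "r \<in> colon_ideal R I a" "x \<in> carrier R"
    then show "x \<otimes> r \<in> colon_ideal R I a"
      using a by (auto simp: colon_ideal_def m_assoc I.I_l_closed)
    then show "r \<otimes> x \<in> colon_ideal R I a"
      using \<open>x \<in> carrier R\<close> \<open>r \<in> colon_ideal R I a\<close> by (simp add: colon_ideal_def m_comm)
  qed (rule ring_axioms)
qed

lemma (in cring) gabriel_filter_product_closed: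
  assumes F: "gabriel_filter R F" and h1: "h1 \<in> F" and h2: "h2 \<in> F" and H: "ideal H R"
    and prod: "\<And>a b. a \<in> h1 \<Longrightarrow> b \<in> h2 \<Longrightarrow> b \<otimes> a \<in> H"
  shows "H \<in> F"
proof (rule gabriel_filter_colon_closed[OF F H h1])
  fix a assume a: "a \<in> h1"
  have carr: "h1 \<subseteq> carrier R" "h2 \<subseteq> carrier R"
    using F h1 h2 by (auto dest: gabriel_filter_ideal ideal.Icarr)
  then have "h2 \<subseteq> colon_ideal R H a"
    using a prod by (auto simp: colon_ideal_def)
  then show "colon_ideal R H a \<in> F"
    using gabriel_filter_upward_closed[OF F h2] ideal_colon_ideal[OF H] a carr by blast
qed

lemma gen_submodule_superset: "S \<subseteq> gen_submodule R M S"
  by (auto simp: gen_submodule_def)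

lemma gen_submodule_least: "submodule P R M \<Longrightarrow> S \<subseteq> P \<Longrightarrow> gen_submodule R M S \<subseteq> P"
  by (auto simp: gen_submodule_def)

context module
begin

lemma submodule_zero_closed: "submodule P R M \<Longrightarrow> \<zero>\<^bsub>M\<^esub> \<in> P"
  using submodule.axioms(1) subgroup.one_closed by fastforce

lemma submodule_gen_submodule:
  assumes "S \<subseteq> carrier M"
  shows "submodule (gen_submodule R M S) R M"
proof (rule submoduleI)
  show "gen_submodule R M S \<subseteq> carrier M"
    using gen_submodule_least[OF carrier_is_submodule assms] .
qed (auto simp: gen_submodule_def dest: submoduleE(3-5) intro: submodule_zero_closed)

lemma gen_submodule_empty: "gen_submodule R M {} = {\<zero>\<^bsub>M\<^esub>}"
proof -
  have "submodule {\<zero>\<^bsub>M\<^esub>} R M" by (rule submoduleI) auto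
  then show ?thesis
    using gen_submodule_least[of "{\<zero>\<^bsub>M\<^esub>}" R M "{}"] submoduleE(2)[OF submodule_gen_submodule]
    by blast
qed

lemma submodule_Inter:
  assumes "\<N> \<noteq> {}" "\<And>N. N \<in> \<N> \<Longrightarrow> submodule N R M"
  shows "submodule (\<Inter>\<N>) R M"
proof (rule submoduleI)
  show "\<Inter>\<N> \<subseteq> carrier M"
    using assms submoduleE(1) by blast
qed (use assms in \<open>auto dest: submoduleE(3-5) intro: submodule_zero_closed\<close>)

lemma submodule_set_add:
  assumes N: "submodule N R M" and P: "submodule P R M"
  shows "submodule (N <+>\<^bsub>M\<^esub> P) R M"
proof (rule submoduleI)
  have carr: "N \<subseteq> carrier M" "P \<subseteq> carrier M" using N P by (auto dest: submoduleE(1))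
  show "N <+>\<^bsub>M\<^esub> P \<subseteq> carrier M" using set_add_closed[OF carr] .
  show "\<zero>\<^bsub>M\<^esub> \<in> N <+>\<^bsub>M\<^esub> P"
    using N P by (force simp: set_add_def' dest: submodule_zero_closed)
  fix y z assume "y \<in> N <+>\<^bsub>M\<^esub> P" "z \<in> N <+>\<^bsub>M\<^esub> P"
  then obtain u p v q where y: "y = u \<oplus>\<^bsub>M\<^esub> p" "u \<in> N" "p \<in> P"
    and z: "z = v \<oplus>\<^bsub>M\<^esub> q" "v \<in> N" "q \<in> P"
    by (auto simp: set_add_def')
  have c: "u \<in> carrier M" "p \<in> carrier M" "v \<in> carrier M" "q \<in> carrier M"
    using y z carr by auto
  have "\<ominus>\<^bsub>M\<^esub> y = \<ominus>\<^bsub>M\<^esub> u \<oplus>\<^bsub>M\<^esub> \<ominus>\<^bsub>M\<^esub> p"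
    using y c by (simp add: M.minus_add)
  then show "\<ominus>\<^bsub>M\<^esub> y \<in> N <+>\<^bsub>M\<^esub> P"
    using y N P by (auto simp: set_add_def' dest: submoduleE(3))
  have "y \<oplus>\<^bsub>M\<^esub> z = (u \<oplus>\<^bsub>M\<^esub> v) \<oplus>\<^bsub>M\<^esub> (p \<oplus>\<^bsub>M\<^esub> q)"
    using y z c by (simp add: M.a_ac)
  then show "y \<oplus>\<^bsub>M\<^esub> z \<in> N <+>\<^bsub>M\<^esub> P"
    using y z N P by (auto simp: set_add_def' dest: submoduleE(5))
next
  fix c y assume "c \<in> carrier R" "y \<in> N <+>\<^bsub>M\<^esub> P"
  then obtain u p where y: "y = u \<oplus>\<^bsub>M\<^esub> p" "u \<in> N" "p \<in> P"
    by (auto simp: set_add_def')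
  then have "c \<odot>\<^bsub>M\<^esub> y = c \<odot>\<^bsub>M\<^esub> u \<oplus>\<^bsub>M\<^esub> c \<odot>\<^bsub>M\<^esub> p"
    using \<open>c \<in> carrier R\<close> submoduleE(1)[OF N] submoduleE(1)[OF P] smult_r_distr by blast
  then show "c \<odot>\<^bsub>M\<^esub> y \<in> N <+>\<^bsub>M\<^esub> P"
    using y N P \<open>c \<in> carrier R\<close> by (auto simp: set_add_def' dest: submoduleE(4))
qed

lemma submodule_cyclic:
  assumes x: "x \<in> carrier M"
  shows "submodule {r \<odot>\<^bsub>M\<^esub> x | r. r \<in> carrier R} R M"
proof (rule submoduleI)
  show "\<zero>\<^bsub>M\<^esub> \<in> {r \<odot>\<^bsub>M\<^esub> x | r. r \<in> carrier R}"
    using x by (force intro: exI[of _ \<zero>])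
  show "\<ominus>\<^bsub>M\<^esub> y \<in> {r \<odot>\<^bsub>M\<^esub> x | r. r \<in> carrier R}"
    if "y \<in> {r \<odot>\<^bsub>M\<^esub> x | r. r \<in> carrier R}" for y
    using that x by (force simp: smult_l_minus[symmetric])
  show "y \<oplus>\<^bsub>M\<^esub> z \<in> {r \<odot>\<^bsub>M\<^esub> x | r. r \<in> carrier R}"
    if "y \<in> {r \<odot>\<^bsub>M\<^esub> x | r. r \<in> carrier R}" "z \<in> {r \<odot>\<^bsub>M\<^esub> x | r. r \<in> carrier R}" for y z
    using that x by (force simp: smult_l_distr[symmetric])
  show "c \<odot>\<^bsub>M\<^esub> y \<in> {r \<odot>\<^bsub>M\<^esub> x | r. r \<in> carrier R}"
    if "c \<in> carrier R" "y \<in> {r \<odot>\<^bsub>M\<^esub> x | r. r \<in> carrier R}" for c y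
    using that x by (force simp: smult_assoc1[symmetric])
qed (use x in auto)

lemma gen_submodule_insert_subset:
  assumes S: "S \<subseteq> carrier M" and x: "x \<in> carrier M"
  shows "gen_submodule R M (insert x S) \<subseteq>
           gen_submodule R M S <+>\<^bsub>M\<^esub> {r \<odot>\<^bsub>M\<^esub> x | r. r \<in> carrier R}"
proof (rule gen_submodule_least)
  show "submodule (gen_submodule R M S <+>\<^bsub>M\<^esub> {r \<odot>\<^bsub>M\<^esub> x | r. r \<in> carrier R}) R M"
    using submodule_set_add[OF submodule_gen_submodule[OF S] submodule_cyclic[OF x]] .
  have "x = \<zero>\<^bsub>M\<^esub> \<oplus>\<^bsub>M\<^esub> \<one> \<odot>\<^bsub>M\<^esub> x" using x by simp
  moreover have "y = y \<oplus>\<^bsub>M\<^esub> \<zero> \<odot>\<^bsub>M\<^esub> x" if "y \<in> S" for y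
    using that S x by auto
  ultimately show "insert x S \<subseteq> gen_submodule R M S <+>\<^bsub>M\<^esub> {r \<odot>\<^bsub>M\<^esub> x | r. r \<in> carrier R}"
    using submodule_zero_closed[OF submodule_gen_submodule[OF S]] gen_submodule_superset[of S R M]
    unfolding set_add_def' by blast
qed

lemma ideal_submodule_colon:
  assumes Q: "submodule Q R M" and Y: "Y \<subseteq> carrier M"
  shows "ideal (submodule_colon R M Q Y) R"
proof (rule idealI)
  have y: "y \<in> carrier M" if "y \<in> Y" for y using that Y by blast
  show "subgroup (submodule_colon R M Q Y) (add_monoid R)"
  proof (rule R.add.subgroupI)
    show "submodule_colon R M Q Y \<noteq> {}"
      using y submodule_zero_closed[OF Q] by (auto simp: submodule_colon_def intro!: exI[of _ \<zero>])
    fix c d assume c: "c \<in> submodule_colon R M Q Y" and d: "d \<in> submodule_colon R M Q Y"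
    show "\<ominus> c \<in> submodule_colon R M Q Y"
      using c y submoduleE(3)[OF Q] by (simp add: submodule_colon_def smult_l_minus)
    show "c \<oplus> d \<in> submodule_colon R M Q Y"
      using c d y submoduleE(5)[OF Q] by (simp add: submodule_colon_def smult_l_distr)
  qed (auto simp: submodule_colon_def)
  fix c r assume c: "c \<in> submodule_colon R M Q Y" and r: "r \<in> carrier R"
  then show rc: "r \<otimes> c \<in> submodule_colon R M Q Y"
    using y submoduleE(4)[OF Q] by (simp add: submodule_colon_def smult_assoc1)
  show "c \<otimes> r \<in> submodule_colon R M Q Y"
    using rc c r by (simp add: submodule_colon_def R.m_comm)
qed (rule R.ring_axioms)

end

lemma submod_ideal_prod_subset_iff:
  assumes N: "\<And>n. submodule (N n) R M" "\<And>n. N (Suc n) \<subseteq> N n" and h: "h \<subseteq> carrier R"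
  shows "(\<forall>s\<ge>m. submod_ideal_prod R M (N m) h \<subseteq> N s) \<longleftrightarrow>
           (\<forall>a\<in>h. \<forall>y\<in>N m. a \<odot>\<^bsub>M\<^esub> y \<in> (\<Inter>n. N n))"
proof
  assume prod: "\<forall>s\<ge>m. submod_ideal_prod R M (N m) h \<subseteq> N s"
  show "\<forall>a\<in>h. \<forall>y\<in>N m. a \<odot>\<^bsub>M\<^esub> y \<in> (\<Inter>n. N n)"
  proof (intro ballI INT_I)
    fix a y s assume a: "a \<in> h" and y: "y \<in> N m"
    show "a \<odot>\<^bsub>M\<^esub> y \<in> N s"
    proof (cases "m \<le> s")
      case True
      have "a \<odot>\<^bsub>M\<^esub> y \<in> submod_ideal_prod R M (N m) h"
        using a y gen_submodule_superset unfolding submod_ideal_prod_def by fast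
      then show ?thesis
        using prod True by blast
    next
      case False
      then have "N m \<subseteq> N s"
        using lift_Suc_antimono_le[of N] N(2) by simp
      then show ?thesis
        using submodule.smult_closed[OF N(1)] a y h by blast
    qed
  qed
next
  assume stat: "\<forall>a\<in>h. \<forall>y\<in>N m. a \<odot>\<^bsub>M\<^esub> y \<in> (\<Inter>n. N n)"
  show "\<forall>s\<ge>m. submod_ideal_prod R M (N m) h \<subseteq> N s"
  proof (intro allI impI)
    fix s
    have "{a \<odot>\<^bsub>M\<^esub> y | a y. a \<in> h \<and> y \<in> N m} \<subseteq> N s"
      using stat by blast
    then show "submod_ideal_prod R M (N m) h \<subseteq> N s"
      unfolding submod_ideal_prod_def by (rule gen_submodule_least[OF N(1)])
  qed
qed

lemma totally_sigma_artinian_iff: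
  assumes "gabriel_filter R F"
  shows "totally_sigma_artinian R F M \<longleftrightarrow>
    (\<forall>N. (\<forall>n. submodule (N n) R M) \<and> (\<forall>n. N (Suc n) \<subseteq> N n) \<longrightarrow> sigma_stationary M F N)"
proof -
  have carr: "\<And>h. h \<in> F \<Longrightarrow> h \<subseteq> carrier R"
    using assms by (auto dest: gabriel_filter_ideal ideal.Icarr)
  have "(\<exists>m. \<exists>h\<in>F. \<forall>s\<ge>m. submod_ideal_prod R M (N m) h \<subseteq> N s) \<longleftrightarrow> sigma_stationary M F N"
    if "\<forall>n. submodule (N n) R M" "\<forall>n. N (Suc n) \<subseteq> N n" for N
    unfolding sigma_stationary_def
    by (intro ex_cong1 bex_cong refl submod_ideal_prod_subset_iff) (use that carr in auto)
  then show ?thesis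
    unfolding totally_sigma_artinian_def by blast
qed

lemma smult_ring_as_module [simp]: "a \<odot>\<^bsub>ring_as_module R\<^esub> b = a \<otimes>\<^bsub>R\<^esub> b"
  by (simp add: ring_as_module_def)

lemma submodule_ring_as_module:
  assumes "ideal I R"
  shows "submodule I R (ring_as_module R)"
proof -
  interpret ideal I R by fact
  have "m_inv (add_monoid (ring_as_module R)) a = \<ominus>\<^bsub>R\<^esub> a" for a
    unfolding m_inv_def a_inv_def by (simp add: ring_as_module_def)
  then show ?thesis
    unfolding submodule_def submodule_axioms_def subgroup_def
    using a_subset by (auto simp: ring_as_module_def I_l_closed a_inv_closed)
qed

lemma ideal_chain_sigma_stationary:
  assumes F: "gabriel_filter R F" and "totally_sigma_artinian R F (ring_as_module R)"
    and "\<And>n. ideal (I n) R" "\<And>n. I (Suc n) \<subseteq> I n"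
  shows "\<exists>m. \<exists>h\<in>F. \<forall>a\<in>h. \<forall>r\<in>I m. a \<otimes>\<^bsub>R\<^esub> r \<in> (\<Inter>n. I n)"
proof -
  have "sigma_stationary (ring_as_module R) F I"
    using assms submodule_ring_as_module unfolding totally_sigma_artinian_iff[OF F] by blast
  then show ?thesis
    unfolding sigma_stationary_def by simp
qed

context module
begin

lemma extension_decomposition:
  assumes N: "\<And>n. submodule (N n) R M" "\<And>n. N (Suc n) \<subseteq> N n"
    and P: "submodule P R M" and x: "x \<in> carrier M"
    and N_sub: "N k \<subseteq> P <+>\<^bsub>M\<^esub> {r \<odot>\<^bsub>M\<^esub> x | r. r \<in> carrier R}"
    and y: "y \<in> N k" and a: "a \<in> carrier R" and "k \<le> t"
    and a_colon: "\<forall>r\<in>submodule_colon R M (N k <+>\<^bsub>M\<^esub> P) {x}.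
                    a \<otimes> r \<in> submodule_colon R M (N t <+>\<^bsub>M\<^esub> P) {x}"
  obtains z y' where "a \<odot>\<^bsub>M\<^esub> y = z \<oplus>\<^bsub>M\<^esub> y'" "z \<in> N k \<inter> P" "y' \<in> N t"
proof -
  have P_carr: "P \<subseteq> carrier M" and N_carr: "\<And>n. N n \<subseteq> carrier M"
    using submoduleE(1) P N(1) by auto
  obtain p r where yp: "y = p \<oplus>\<^bsub>M\<^esub> r \<odot>\<^bsub>M\<^esub> x" and p: "p \<in> P" and r: "r \<in> carrier R"
    using N_sub y unfolding set_add_def' by blast
  have p_carr: "p \<in> carrier M"
    using p P_carr by auto
  have "r \<odot>\<^bsub>M\<^esub> x = y \<oplus>\<^bsub>M\<^esub> \<ominus>\<^bsub>M\<^esub> p"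
    using r x p_carr by (simp add: yp M.a_comm[of p] M.a_assoc M.r_neg)
  then have "r \<in> submodule_colon R M (N k <+>\<^bsub>M\<^esub> P) {x}"
    using y p r submoduleE(3)[OF P] unfolding submodule_colon_def set_add_def' by blast
  then obtain y' p' where y': "y' \<in> N t" and p': "p' \<in> P"
    and arx: "(a \<otimes> r) \<odot>\<^bsub>M\<^esub> x = y' \<oplus>\<^bsub>M\<^esub> p'"
    using a_colon unfolding submodule_colon_def set_add_def' by blast
  define z where "z = a \<odot>\<^bsub>M\<^esub> p \<oplus>\<^bsub>M\<^esub> p'"
  have p'_carr: "p' \<in> carrier M" and y'_carr: "y' \<in> carrier M"
    using p' y' P_carr N_carr by auto
  have "a \<odot>\<^bsub>M\<^esub> y = a \<odot>\<^bsub>M\<^esub> p \<oplus>\<^bsub>M\<^esub> (y' \<oplus>\<^bsub>M\<^esub> p')"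
    using a r x p_carr by (simp add: yp smult_r_distr arx[symmetric] smult_assoc1)
  also have "\<dots> = z \<oplus>\<^bsub>M\<^esub> y'"
    using a p_carr p'_carr y'_carr by (simp add: z_def M.a_ac)
  finally have ay: "a \<odot>\<^bsub>M\<^esub> y = z \<oplus>\<^bsub>M\<^esub> y'" .
  have "z = a \<odot>\<^bsub>M\<^esub> y \<oplus>\<^bsub>M\<^esub> \<ominus>\<^bsub>M\<^esub> y'"
    using ay a p_carr p'_carr y'_carr by (simp add: z_def M.a_assoc M.r_neg)
  moreover have "y' \<in> N k"
    using y' lift_Suc_antimono_le[of N, OF N(2) \<open>k \<le> t\<close>] by blast
  moreover have "a \<odot>\<^bsub>M\<^esub> y \<in> N k"
    using submoduleE(4)[OF N(1) a y] .
  ultimately have "z \<in> N k"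
    using submoduleE(3,5)[OF N(1)] by simp
  moreover have "z \<in> P"
    unfolding z_def using submoduleE(4,5)[OF P] a p p' by blast
  ultimately show ?thesis
    using that ay y' by blast
qed

lemma mult_smult_mem_Inter_extension:
  assumes N: "\<And>n. submodule (N n) R M" "\<And>n. N (Suc n) \<subseteq> N n"
    and P: "submodule P R M" and x: "x \<in> carrier M"
    and N_sub: "N k \<subseteq> P <+>\<^bsub>M\<^esub> {r \<odot>\<^bsub>M\<^esub> x | r. r \<in> carrier R}"
    and y: "y \<in> N k" and a: "a \<in> carrier R" and b: "b \<in> carrier R"
    and a_colon: "\<forall>r\<in>submodule_colon R M (N k <+>\<^bsub>M\<^esub> P) {x}.
                    a \<otimes> r \<in> (\<Inter>n. submodule_colon R M (N n <+>\<^bsub>M\<^esub> P) {x})"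
    and b_stat: "\<forall>z\<in>N k \<inter> P. b \<odot>\<^bsub>M\<^esub> z \<in> (\<Inter>n. N n \<inter> P)"
  shows "(b \<otimes> a) \<odot>\<^bsub>M\<^esub> y \<in> (\<Inter>n. N n)"
proof
  fix s
  define t where "t = max s k"
  obtain z y' where ay: "a \<odot>\<^bsub>M\<^esub> y = z \<oplus>\<^bsub>M\<^esub> y'" and z: "z \<in> N k \<inter> P" and y': "y' \<in> N t"
    using extension_decomposition[OF N P x N_sub y a, of t] a_colon by (auto simp: t_def)
  have carr: "y \<in> carrier M" "z \<in> carrier M" "y' \<in> carrier M"
    using y z y' submoduleE(1)[OF N(1)] by auto
  have "b \<odot>\<^bsub>M\<^esub> z \<in> N s"
    using b_stat z by blast
  moreover have "b \<odot>\<^bsub>M\<^esub> y' \<in> N s"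
    using submoduleE(4)[OF N(1) b y'] lift_Suc_antimono_le[of N, OF N(2), of s t]
    by (auto simp: t_def)
  moreover have "(b \<otimes> a) \<odot>\<^bsub>M\<^esub> y = b \<odot>\<^bsub>M\<^esub> z \<oplus>\<^bsub>M\<^esub> b \<odot>\<^bsub>M\<^esub> y'"
    using a b carr by (simp add: smult_assoc1 ay smult_r_distr)
  ultimately show "(b \<otimes> a) \<odot>\<^bsub>M\<^esub> y \<in> N s"
    using submoduleE(5)[OF N(1)] by simp
qed

lemma sigma_stationary_extension:
  assumes F: "gabriel_filter R F" and R_art: "totally_sigma_artinian R F (ring_as_module R)"
    and N: "\<And>n. submodule (N n) R M" "\<And>n. N (Suc n) \<subseteq> N n"
    and P: "submodule P R M" and x: "x \<in> carrier M"
    and N_sub: "\<And>n. N n \<subseteq> P <+>\<^bsub>M\<^esub> {r \<odot>\<^bsub>M\<^esub> x | r. r \<in> carrier R}"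
    and N_inter_P: "sigma_stationary M F (\<lambda>n. N n \<inter> P)"
  shows "sigma_stationary M F N"
proof -
  define I where "I n = submodule_colon R M (N n <+>\<^bsub>M\<^esub> P) {x}" for n
  have I_ideal: "\<And>n. ideal (I n) R"
    unfolding I_def by (intro ideal_submodule_colon submodule_set_add N(1) P) (use x in blast)
  have I_desc: "I (Suc n) \<subseteq> I n" for n
  proof -
    have "N (Suc n) <+>\<^bsub>M\<^esub> P \<subseteq> N n <+>\<^bsub>M\<^esub> P"
      using N(2) unfolding set_add_def' by blast
    then show ?thesis
      by (auto simp: I_def submodule_colon_def)
  qed
  obtain m1 h1 where h1: "h1 \<in> F" and m1: "\<forall>a\<in>h1. \<forall>r\<in>I m1. a \<otimes> r \<in> (\<Inter>n. I n)"
    using ideal_chain_sigma_stationary[of R F I, OF F R_art I_ideal I_desc] by blast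
  obtain m2 h2 where h2: "h2 \<in> F"
    and m2: "\<forall>b\<in>h2. \<forall>z\<in>N m2 \<inter> P. b \<odot>\<^bsub>M\<^esub> z \<in> (\<Inter>n. N n \<inter> P)"
    using N_inter_P unfolding sigma_stationary_def by blast
  have carr: "h1 \<subseteq> carrier R" "h2 \<subseteq> carrier R"
    using F h1 h2 by (auto dest: gabriel_filter_ideal ideal.Icarr)
  define k where "k = max m1 m2"
  have I_k: "I k \<subseteq> I m1" and N_k: "N k \<subseteq> N m2"
    using lift_Suc_antimono_le[of I, OF I_desc] lift_Suc_antimono_le[of N, OF N(2)]
    by (simp_all add: k_def)
  define H where "H = submodule_colon R M (\<Inter>n. N n) (N k)"
  have H_prod: "b \<otimes> a \<in> H" if a: "a \<in> h1" and b: "b \<in> h2" for a b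
  proof -
    have a_colon: "\<forall>r\<in>I k. a \<otimes> r \<in> (\<Inter>n. I n)"
      using m1 a I_k by blast
    have b_stat: "\<forall>z\<in>N k \<inter> P. b \<odot>\<^bsub>M\<^esub> z \<in> (\<Inter>n. N n \<inter> P)"
      using m2 b N_k by blast
    have "\<forall>y\<in>N k. (b \<otimes> a) \<odot>\<^bsub>M\<^esub> y \<in> (\<Inter>n. N n)"
      using mult_smult_mem_Inter_extension[of N, OF N P x N_sub _ _ _ a_colon[unfolded I_def] b_stat]
        a b carr by blast
    moreover have "b \<otimes> a \<in> carrier R"
      using a b carr by (blast intro: R.m_closed)
    ultimately show ?thesis
      by (simp add: H_def submodule_colon_def)
  qed
  have H_ideal: "ideal H R"
    unfolding H_def
    by (rule ideal_submodule_colon[OF submodule_Inter submoduleE(1)[OF N(1)]]) (use N(1) in auto)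
  have "H \<in> F"
    using R.gabriel_filter_product_closed[OF F h1 h2 H_ideal H_prod] .
  then show ?thesis
    unfolding sigma_stationary_def
    by (intro exI[of _ k] bexI[of _ H]) (simp_all add: H_def submodule_colon_def)
qed

lemma sigma_stationary_finitely_generated:
  assumes F: "gabriel_filter R F" and R_art: "totally_sigma_artinian R F (ring_as_module R)"
    and "finite S" "S \<subseteq> carrier M"
    and "\<And>n. submodule (N n) R M" "\<And>n. N (Suc n) \<subseteq> N n"
    and "\<And>n. N n \<subseteq> gen_submodule R M S"
  shows "sigma_stationary M F N"
  using assms(3-)
proof (induction S arbitrary: N rule: finite_induct)
  case empty
  then have "N n = {\<zero>\<^bsub>M\<^esub>}" for n
    using empty.prems(4)[of n] submodule_zero_closed[OF empty.prems(2)] gen_submodule_empty by blast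
  then have "\<forall>a\<in>carrier R. \<forall>y\<in>N 0. a \<odot>\<^bsub>M\<^esub> y \<in> (\<Inter>n. N n)"
    by simp
  then show ?case
    unfolding sigma_stationary_def using gabriel_filter_carrier[OF F] by blast
next
  case (insert x S)
  let ?P = "gen_submodule R M S"
  have P: "submodule ?P R M"
    using submodule_gen_submodule insert.prems(1) by simp
  have "sigma_stationary M F (\<lambda>n. N n \<inter> ?P)"
  proof (rule insert.IH)
    show "submodule (N n \<inter> ?P) R M" for n
      using submodule_Inter[of "{N n, ?P}"] insert.prems(2) P by auto
  qed (use insert.prems in auto)
  moreover have "N n \<subseteq> ?P <+>\<^bsub>M\<^esub> {r \<odot>\<^bsub>M\<^esub> x | r. r \<in> carrier R}" for n
    using insert.prems(4)[of n] gen_submodule_insert_subset[of S x] insert.prems(1) by blast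
  ultimately show ?case
    using sigma_stationary_extension[of F N, OF F R_art insert.prems(2,3) P] insert.prems(1) by blast
qed

end

theorem mainTheorem12:
  fixes R :: "('a, 'n) ring_scheme" and F :: "'a set set"
    and M :: "('a, 'b, 'm) module_scheme"
  assumes "cring R"
    and "gabriel_filter R F"
    and "totally_sigma_artinian R F (ring_as_module R)"
    and "module R M"
    and "finitely_generated_module R M"
  shows "totally_sigma_artinian R F M"
proof -
  interpret module R M by fact
  obtain S where S: "finite S" "S \<subseteq> carrier M" "gen_submodule R M S = carrier M"
    using assms(5) unfolding finitely_generated_module_def by blast
  show ?thesis
    unfolding totally_sigma_artinian_iff[OF assms(2)]
  proof (intro allI impI, elim conjE)
    fix N assume "\<forall>n. submodule (N n) R M" "\<forall>n. N (Suc n) \<subseteq> N n"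
    then show "sigma_stationary M F N"
      using sigma_stationary_finitely_generated[OF assms(2,3) S(1,2)] S(3) submoduleE(1) by blast
  qed
qed

end
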